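(* Let $0<V\le1$ and let $P^{col}_{BB84}$ be the box on $a,b,x,y\in\{0,1\}$ given by $$P^{col}_{BB84}(ab|xy)=\frac{1+(-1)^{a\oplus b\oplus x\cdot y}\big[\delta_{x,y}V+\tfrac{1-V}{2}\big]+(-1)^{a\oplus b\oplus x\oplus y}\tfrac{1-V}{2}}{4}.$$ Let $\{|f_1\rangle,|f_2\rangle\}$ and $\{|g_1\rangle,|g_2\rangle\}$ be any two mutually unbiased orthonormal bases of $\mathbb{C}^2$ ($|\langle f_i|g_j\rangle|^2=1/2$ for all $i,j$), and let $\Pi_{b|0}=|f_{b+1}\rangle\langle f_{b+1}|$, $\Pi_{b|1}=|g_{b+1}\rangle\langle g_{b+1}|$. Then for every $V>0$, $P^{col}_{BB84}$ cannot be written as $$P^{col}_{BB84}(ab|xy)=\sum_{\chi,\zeta}p(\chi,\zeta)\,\delta_{a,f(x,\chi)}\,\langle\psi_\zeta|\Pi_{b|y}|\psi_\zeta\rangle\quad\forall a,b,x,y,$$ for any probability distribution $p(\chi,\zeta)$ (finitely many terms), any deterministic response functions $f(\cdot,\chi):\{0,1\}\to\{0,1\}$, and any pure qubit states $|\psi_\zeta\rangle\in\mathbb{C}^2$.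
   Context: $\oplus$ denotes addition modulo 2 and $\delta_{x,y}$ the Kronecker delta. The displayed decomposition is a convex mixture of the extremal points of the set of unsteerable boxes (boxes admitting a local hidden variable–local hidden state model) of the steering scenario in which Alice performs two black-box dichotomic measurements and Bob performs the two given qubit projective measurements. *)

theory Defs
  imports "HOL-Analysis.Analysis"
begin

text \<open>Qubit vectors are elements of complex^2 (components indexed 1, 2).
  braket u v is the Dirac inner product, conjugate-linear in the first argument.\<close>
definition braket :: "complex ^ 2 \<Rightarrow> complex ^ 2 \<Rightarrow> complex" where
  "braket u v = (\<Sum>i\<in>UNIV. cnj (u $ i) * v $ i)"

definition P_col_BB84 :: "real \<Rightarrow> nat \<Rightarrow> nat \<Rightarrow> nat \<Rightarrow> nat \<Rightarrow> real" where
  "P_col_BB84 V a b x y =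
     (1 + (-1) ^ (a + b + x * y) * ((if x = y then V else 0) + (1 - V) / 2)
        + (-1) ^ (a + b + x + y) * ((1 - V) / 2)) / 4"

text \<open>Orthonormal basis {e 0, e 1} of complex^2 (e b stands for the paper's vector with index b+1).\<close>
definition orthonormal_basis2 :: "(nat \<Rightarrow> complex ^ 2) \<Rightarrow> bool" where
  "orthonormal_basis2 e \<longleftrightarrow>
     (\<forall>i\<in>{0,1}. \<forall>j\<in>{0,1}. braket (e i) (e j) = (if i = j then 1 else 0))"

text \<open>Bob's measurement: Pi_{b|0} = |F b><F b|, Pi_{b|1} = |G b><G b|;
  bob_prob F G y b psi = <psi|Pi_{b|y}|psi>.\<close>
definition bob_prob :: "(nat \<Rightarrow> complex ^ 2) \<Rightarrow> (nat \<Rightarrow> complex ^ 2) \<Rightarrow> nat \<Rightarrow> nat \<Rightarrow> complex ^ 2 \<Rightarrow> real" where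
  "bob_prob F G y b psi = (cmod (braket (if y = 0 then F b else G b) psi))\<^sup>2"

end

theory Submission
  imports Defs
begin

text \<open>Perfect correlation of the box at \<open>x = y = 0\<close> forces every hidden state of positive weight to
  be (up to phase) a vector of Bob's first basis, namely the one selected by Alice's deterministic
  answer \<open>f 0\<close>. By mutual unbiasedness, every such state gives Bob's second measurement uniformly
  random outcomes, so the model predicts \<open>P(00|11) = P(01|11)\<close>. The box has
  \<open>P(00|11) = (1 - V)/4\<close> and \<open>P(01|11) = (1 + V)/4\<close>, which differ as soon as \<open>V > 0\<close>.\<close>

lemma braket_expand: "braket u v = cnj (u $ 1) * v $ 1 + cnj (u $ 2) * v $ 2"
  by (simp add: braket_def sum_2)

lemma cnj_braket: "cnj (braket u v) = braket v u"
  by (simp add: braket_def mult.commute)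

lemma braket_scale_right: "braket u (c *s v) = c * braket u v"
  by (simp add: braket_def sum_distrib_left ac_simps)

lemma braket_scale_left: "braket (c *s u) v = cnj c * braket u v"
  by (simp add: braket_def sum_distrib_left ac_simps)

lemma qubit_resolution_of_identity:
  fixes u v w :: "complex ^ 2"
  assumes "braket u u = 1" "braket v v = 1" "braket v u = 0"
  shows "w = braket u w *s u + braket v w *s v"
proof -
  have "braket u v = 0"
    using assms(3) cnj_braket by (metis complex_cnj_zero)
  then have "w $ 1 = braket u w * u $ 1 + braket v w * v $ 1 \<and>
             w $ 2 = braket u w * u $ 2 + braket v w * v $ 2"
    using assms unfolding braket_expand by algebra
  then show ?thesis
    by (simp add: vec_eq_iff forall_2)
qed

lemma cmod_braket_phase_invariant:
  assumes "braket u u = 1" "braket (c *s u) (c *s u) = 1"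
  shows "cmod (braket g (c *s u)) = cmod (braket g u)"
proof -
  have "cnj c * c = 1"
    using assms by (simp add: braket_scale_left braket_scale_right ac_simps)
  then have "(cmod c)\<^sup>2 = 1"
    by (metis complex_norm_square mult.commute of_real_eq_1_iff)
  then have "cmod c = 1"
    using norm_ge_zero[of c] by (auto simp: power2_eq_1_iff)
  then show ?thesis
    by (simp add: braket_scale_right norm_mult)
qed

lemma overlap_of_state_orthogonal_to_basis_vector:
  fixes u v w g :: "complex ^ 2"
  assumes "braket u u = 1" "braket v v = 1" "braket v u = 0"
    and "braket w w = 1" "braket v w = 0"
  shows "cmod (braket g w) = cmod (braket g u)"
proof -
  have w: "w = braket u w *s u"
    using qubit_resolution_of_identity[OF assms(1-3), of w] assms(5) by simp
  show ?thesis
    using cmod_braket_phase_invariant[OF assms(1), of "braket u w"] assms(4) w by metis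
qed

lemma sum_sum_nonneg_eq_0_iff:
  fixes t :: "'a \<Rightarrow> 'b \<Rightarrow> real"
  assumes "finite X" "finite Z" "\<And>c z. c \<in> X \<Longrightarrow> z \<in> Z \<Longrightarrow> 0 \<le> t c z"
  shows "(\<Sum>c\<in>X. \<Sum>z\<in>Z. t c z) = 0 \<longleftrightarrow> (\<forall>c\<in>X. \<forall>z\<in>Z. t c z = 0)"
  using assms by (simp add: sum_nonneg_eq_0_iff sum_nonneg)

lemma P_col_BB84_anticorrelated_00: "a \<in> {0, 1} \<Longrightarrow> P_col_BB84 V a (1 - a) 0 0 = 0"
  by (auto simp: P_col_BB84_def field_simps)

lemma P_col_BB84_00_11: "P_col_BB84 V 0 0 1 1 = (1 - V) / 4"
  by (simp add: P_col_BB84_def field_simps)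

lemma P_col_BB84_01_11: "P_col_BB84 V 0 1 1 1 = (1 + V) / 4"
  by (simp add: P_col_BB84_def field_simps)

locale bb84_lhs_model =
  fixes V :: real and F G :: "nat \<Rightarrow> complex ^ 2"
    and X Z :: "nat set" and p :: "nat \<Rightarrow> nat \<Rightarrow> real"
    and f :: "nat \<Rightarrow> nat \<Rightarrow> nat" and psi :: "nat \<Rightarrow> complex ^ 2"
  assumes F_basis: "orthonormal_basis2 F"
    and unbiased: "\<forall>i\<in>{0,1}. \<forall>j\<in>{0,1}. (cmod (braket (F i) (G j)))\<^sup>2 = 1 / 2"
    and finite_X: "finite X" and finite_Z: "finite Z"
    and p_nonneg: "\<forall>c\<in>X. \<forall>z\<in>Z. 0 \<le> p c z"
    and f_range: "\<forall>c\<in>X. \<forall>x\<in>{0,1}. f x c \<in> {0,1}"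
    and psi_normalized: "\<forall>z\<in>Z. braket (psi z) (psi z) = 1"
    and decomposition: "\<forall>a\<in>{0,1}. \<forall>b\<in>{0,1}. \<forall>x\<in>{0,1}. \<forall>y\<in>{0,1}.
      P_col_BB84 V a b x y =
        (\<Sum>c\<in>X. \<Sum>z\<in>Z. p c z * (if a = f x c then 1 else 0) * bob_prob F G y b (psi z))"
begin

lemma term_nonneg: "c \<in> X \<Longrightarrow> z \<in> Z \<Longrightarrow>
    0 \<le> p c z * (if a = f x c then 1 else 0) * bob_prob F G y b (psi z)"
  using p_nonneg by (simp add: bob_prob_def)

lemma hidden_state_orthogonal_to_anticorrelated_outcome:
  assumes "c \<in> X" "z \<in> Z" "p c z \<noteq> 0"
  shows "braket (F (1 - f 0 c)) (psi z) = 0"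
proof -
  define a where "a = f 0 c"
  have a: "a \<in> {0, 1}"
    using f_range assms(1) by (simp add: a_def)
  have "(\<Sum>c\<in>X. \<Sum>z\<in>Z. p c z * (if a = f 0 c then 1 else 0) * bob_prob F G 0 (1 - a) (psi z)) = 0"
    using decomposition a P_col_BB84_anticorrelated_00[OF a] by auto
  then have "\<forall>c\<in>X. \<forall>z\<in>Z. p c z * (if a = f 0 c then 1 else 0) * bob_prob F G 0 (1 - a) (psi z) = 0"
    by (subst (asm) sum_sum_nonneg_eq_0_iff[OF finite_X finite_Z]) (use term_nonneg in auto)
  then have "p c z * (if a = f 0 c then 1 else 0) * bob_prob F G 0 (1 - a) (psi z) = 0"
    using assms(1,2) by blast
  then show ?thesis
    using assms(3) by (simp add: bob_prob_def a_def)
qed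

lemma hidden_state_unbiased_for_second_measurement:
  assumes "c \<in> X" "z \<in> Z" "p c z \<noteq> 0" "b \<in> {0, 1}"
  shows "bob_prob F G 1 b (psi z) = 1 / 2"
proof -
  define a where "a = f 0 c"
  have a: "a \<in> {0, 1}"
    using f_range assms(1) by (simp add: a_def)
  have "cmod (braket (G b) (psi z)) = cmod (braket (G b) (F a))"
  proof (rule overlap_of_state_orthogonal_to_basis_vector)
    show "braket (F a) (F a) = 1" "braket (F (1 - a)) (F (1 - a)) = 1" "braket (F (1 - a)) (F a) = 0"
      using F_basis a unfolding orthonormal_basis2_def by auto
    show "braket (psi z) (psi z) = 1"
      using psi_normalized assms(2) by simp
    show "braket (F (1 - a)) (psi z) = 0"
      using hidden_state_orthogonal_to_anticorrelated_outcome[OF assms(1-3)] by (simp add: a_def)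
  qed
  moreover have "cmod (braket (G b) (F a)) = cmod (braket (F a) (G b))"
    by (metis cnj_braket complex_mod_cnj)
  moreover have "(cmod (braket (F a) (G b)))\<^sup>2 = 1 / 2"
    using unbiased a assms(4) by blast
  ultimately show ?thesis
    by (simp add: bob_prob_def)
qed

lemma predicts_equal_outcomes_11: "P_col_BB84 V 0 0 1 1 = P_col_BB84 V 0 1 1 1"
proof -
  have "p c z * (if 0 = f 1 c then 1 else 0) * bob_prob F G 1 0 (psi z) =
        p c z * (if 0 = f 1 c then 1 else 0) * bob_prob F G 1 1 (psi z)"
    if "c \<in> X" "z \<in> Z" for c z
  proof (cases "p c z = 0")
    case False
    then show ?thesis
      using hidden_state_unbiased_for_second_measurement[OF that False, of 0]
        hidden_state_unbiased_for_second_measurement[OF that False, of 1] by simp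
  qed simp
  then have "(\<Sum>c\<in>X. \<Sum>z\<in>Z. p c z * (if 0 = f 1 c then 1 else 0) * bob_prob F G 1 0 (psi z)) =
             (\<Sum>c\<in>X. \<Sum>z\<in>Z. p c z * (if 0 = f 1 c then 1 else 0) * bob_prob F G 1 1 (psi z))"
    by (intro sum.cong refl)
  then show ?thesis
    using decomposition[rule_format, of 0 0 1 1] decomposition[rule_format, of 0 1 1 1] by simp
qed

end

theorem theorem2:
  fixes V :: real and F G :: "nat \<Rightarrow> complex ^ 2"
  assumes "0 < V" and "V \<le> 1"
    and "orthonormal_basis2 F" and "orthonormal_basis2 G"
    and "\<forall>i\<in>{0,1}. \<forall>j\<in>{0,1}. (cmod (braket (F i) (G j)))\<^sup>2 = 1 / 2"
  shows "\<not> (\<exists>(X :: nat set) (Z :: nat set) (p :: nat \<Rightarrow> nat \<Rightarrow> real)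
              (f :: nat \<Rightarrow> nat \<Rightarrow> nat) (psi :: nat \<Rightarrow> complex ^ 2).
            finite X \<and> finite Z \<and>
            (\<forall>c\<in>X. \<forall>z\<in>Z. 0 \<le> p c z) \<and>
            (\<Sum>c\<in>X. \<Sum>z\<in>Z. p c z) = 1 \<and>
            (\<forall>c\<in>X. \<forall>x\<in>{0,1}. f x c \<in> {0,1}) \<and>
            (\<forall>z\<in>Z. braket (psi z) (psi z) = 1) \<and>
            (\<forall>a\<in>{0,1}. \<forall>b\<in>{0,1}. \<forall>x\<in>{0,1}. \<forall>y\<in>{0,1}.
               P_col_BB84 V a b x y =
                 (\<Sum>c\<in>X. \<Sum>z\<in>Z. p c z * (if a = f x c then 1 else 0)
                                     * bob_prob F G y b (psi z))))"
proof (intro notI, elim exE conjE, goal_cases)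
  case (1 X Z p f psi)
  have "bb84_lhs_model V F G X Z p f psi"
    by (intro bb84_lhs_model.intro) (fact 1 assms(3,5))+
  then have "P_col_BB84 V 0 0 1 1 = P_col_BB84 V 0 1 1 1"
    by (rule bb84_lhs_model.predicts_equal_outcomes_11)
  then show False
    unfolding P_col_BB84_00_11 P_col_BB84_01_11 using assms(1) by simp
qed

end
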